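(* Let bidder $i$ have a constraint-homogeneous valuation with interest set $S$ and per-unit value $\hat v$, let $s^*=\lceil |S|/2\rceil$, and let $b_i'$ be the Core Deviation of $i$. Let $b$ be any strategy profile and let $p_1\le p_2\le\dots\le p_{|S|}$ be the prices at which the items of $S$ are sold under $b$, sorted in non-decreasing order. If bidder $i$ wins fewer than $s^*$ items of $S$ in the profile $(b_i'(b_i),b_{-i})$, then $p_{s^*}\ge \hat v/2$.
   Context: Draft auction: $n$ bidders, items $[m]$; rounds are run while the set $I$ of remaining items is nonempty: each bidder submits a sealed bid $b_i\ge0$ and a set $X_i\subseteq I$; the highest bidder (ties arbitrary) gets her set (removed from $I$) and pays her bid times its size; winner, winning bid and bundle are announced. A strategy maps observed histories to actions. The price at which an item is sold is the winning bid of the round in which it is allocated. Constraint-homogeneous valuation: $v(T)=\hat v|T\cap S|$. Items of $S$ are called units. For the original strategy $b_i$ (within profile $b$), $b_{it}$ denotes $i$'s bid in auction $t$, $k_{it}$ the number of units she obtains in auction $t$, $k_{i,<t}$ the number obtained before auction $t$. Core Deviation $b_i'$: let $b_i^*=\hat v/2$. In every auction $t$ she bids $\max\{b_i^*,b_{it}\}$. If she wins with bid $b_i^*$ (i.e. $b_i^*>b_{it}$), she takes $s^*-k_{i,<t}$ units of $S$ and drops out. If she wins with bid $b_{it}$, she takes exactly what she took under $b_i$ in auction $t$. She keeps bidding this way until she has acquired $s^*$ units or the remaining units are not enough to complete $s^*$ units. *)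

theory Defs
  imports Complex_Main
begin

(* Draft auction model.
   Bidders are the naturals 0..<n, items are 1..m.
   A public history is the list of announcements (winner, winning bid, bundle). *)

type_synonym hist = "(nat \<times> real \<times> nat set) list"
type_synonym strategy = "hist \<Rightarrow> real \<times> nat set"   (* bid and requested set *)
type_synonym profile = "nat \<Rightarrow> strategy"

definition ch_valuation :: "nat set \<Rightarrow> real \<Rightarrow> nat set \<Rightarrow> real" where
  "ch_valuation S vhat T = vhat * real (card (T \<inter> S))"

definition remaining :: "nat \<Rightarrow> hist \<Rightarrow> nat set" where
  "remaining m h = {1..m} - \<Union> ((\<lambda>a. snd (snd a)) ` set h)"

definition valid_profile :: "nat \<Rightarrow> nat \<Rightarrow> profile \<Rightarrow> bool" where
  "valid_profile n m P \<longleftrightarrow>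
     (\<forall>h j. j < n \<longrightarrow> 0 \<le> fst (P j h) \<and> snd (P j h) \<subseteq> remaining m h)"

definition top_bidders :: "nat \<Rightarrow> profile \<Rightarrow> hist \<Rightarrow> nat set" where
  "top_bidders n P h = {j. j < n \<and> (\<forall>k<n. fst (P k h) \<le> fst (P j h))}"

definition round_winner :: "nat \<Rightarrow> (hist \<Rightarrow> nat \<Rightarrow> nat) \<Rightarrow> profile \<Rightarrow> hist \<Rightarrow> nat" where
  "round_winner n rank P h = arg_min (rank h) (\<lambda>j. j \<in> top_bidders n P h)"

definition auction_step :: "nat \<Rightarrow> nat \<Rightarrow> (hist \<Rightarrow> nat \<Rightarrow> nat) \<Rightarrow> profile \<Rightarrow> hist \<Rightarrow> hist" where
  "auction_step n m rank P h =
     (if remaining m h = {} then h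
      else (let w = round_winner n rank P h in h @ [(w, fst (P w h), snd (P w h))]))"

primrec run :: "nat \<Rightarrow> nat \<Rightarrow> (hist \<Rightarrow> nat \<Rightarrow> nat) \<Rightarrow> profile \<Rightarrow> nat \<Rightarrow> hist" where
  "run n m rank P 0 = []"
| "run n m rank P (Suc t) = auction_step n m rank P (run n m rank P t)"

definition sold_items :: "nat \<Rightarrow> nat \<Rightarrow> (hist \<Rightarrow> nat \<Rightarrow> nat) \<Rightarrow> profile \<Rightarrow> nat set" where
  "sold_items n m rank P = {x. \<exists>t w p X. (w, p, X) \<in> set (run n m rank P t) \<and> x \<in> X}"

definition items_won :: "nat \<Rightarrow> nat \<Rightarrow> (hist \<Rightarrow> nat \<Rightarrow> nat) \<Rightarrow> profile \<Rightarrow> nat \<Rightarrow> nat set" where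
  "items_won n m rank P i = {x. \<exists>t p X. (i, p, X) \<in> set (run n m rank P t) \<and> x \<in> X}"

definition sale_price :: "nat \<Rightarrow> nat \<Rightarrow> (hist \<Rightarrow> nat \<Rightarrow> nat) \<Rightarrow> profile \<Rightarrow> nat \<Rightarrow> real" where
  "sale_price n m rank P x = (SOME p. \<exists>t w X. (w, p, X) \<in> set (run n m rank P t) \<and> x \<in> X)"

definition sstar :: "nat set \<Rightarrow> nat" where
  "sstar S = nat \<lceil>real (card S) / 2\<rceil>"

definition units_won_hist :: "nat set \<Rightarrow> nat \<Rightarrow> hist \<Rightarrow> nat" where
  "units_won_hist S i h = card (S \<inter> \<Union> {X. \<exists>p. (i, p, X) \<in> set h})"

(* Once inactive ("drops out") her behaviour is unconstrained. *)
definition core_deviation :: "nat \<Rightarrow> nat set \<Rightarrow> real \<Rightarrow> nat \<Rightarrow> strategy \<Rightarrow> strategy \<Rightarrow> bool" where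
  "core_deviation m S vhat i bi d \<longleftrightarrow>
     (\<forall>h. let k = units_won_hist S i h; R = S \<inter> remaining m h in
        (k < sstar S \<and> sstar S \<le> k + card R) \<longrightarrow>
          (if vhat / 2 \<le> fst (bi h) then d h = bi h
           else fst (d h) = vhat / 2 \<and> snd (d h) \<subseteq> R \<and> card (snd (d h)) = sstar S - k))"

end

theory Submission
  imports Defs "HOL-Library.Multiset"
begin

text \<open>While bidder \<open>i\<close> is active under the Core Deviation she bids at least
  \<open>\<hat>v/2\<close>, so every round of that period is won with a bid of at least \<open>\<hat>v/2\<close>.
  Had she won such a round with her raised bid \<open>\<hat>v/2\<close>, she would have completed \<open>s*\<close>
  units, which the hypothesis rules out; hence the winners, and therefore the histories, coincide
  with those of the original profile \<open>b\<close>. So under \<open>b\<close> every unit sold before \<open>i\<close> becomes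
  inactive fetches at least \<open>\<hat>v/2\<close>, and when she becomes inactive fewer than \<open>s*\<close> units
  are left. Thus fewer than \<open>s*\<close> units are sold below \<open>\<hat>v/2\<close>, which bounds the
  \<open>s*\<close>-th smallest price.\<close>

lemma top_bidders_nonempty:
  assumes "0 < n" shows "\<exists>j. j \<in> top_bidders n P h"
proof -
  let ?F = "(\<lambda>k. fst (P k h)) ` {..<n}"
  have fin: "finite ?F" and ne: "?F \<noteq> {}" using assms by auto
  obtain j where j: "j < n" "fst (P j h) = Max ?F" using Max_in[OF fin ne] by auto
  have "fst (P k h) \<le> fst (P j h)" if "k < n" for k
    using that Max_ge[OF fin] j(2) by simp
  then show ?thesis using j(1) unfolding top_bidders_def by blast
qed

lemma round_winner_in_top_bidders:
  assumes "0 < n" shows "round_winner n rank P h \<in> top_bidders n P h"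
proof -
  obtain j where "j \<in> top_bidders n P h" using top_bidders_nonempty[OF assms] by blast
  then show ?thesis unfolding round_winner_def by (rule arg_min_natI)
qed

lemma round_winner_rank_le:
  assumes "j \<in> top_bidders n P h"
  shows "rank h (round_winner n rank P h) \<le> rank h j"
  unfolding round_winner_def using arg_min_nat_le[of "\<lambda>j. j \<in> top_bidders n P h", OF assms] .

lemma round_winner_less: "0 < n \<Longrightarrow> round_winner n rank P h < n"
  using round_winner_in_top_bidders[of n rank P h] unfolding top_bidders_def by simp

lemma bid_le_winning_bid:
  "0 < n \<Longrightarrow> k < n \<Longrightarrow> fst (P k h) \<le> fst (P (round_winner n rank P h) h)"
  using round_winner_in_top_bidders[of n rank P h] unfolding top_bidders_def by simp

text \<open>Raising one bidder's bid does not change the winner unless the raised bidder wins: the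
  top bidders can only lose members, and the tie-breaking rank picks the same one.\<close>

lemma round_winner_unchanged_if_raised_bidder_loses:
  assumes n: "0 < n" and i: "i < n" and inj: "inj_on (rank h) {..<n}"
    and raised: "fst (P i h) < fst (P' i h)"
    and others: "\<And>j. j \<noteq> i \<Longrightarrow> P' j h = P j h"
    and loses: "round_winner n rank P' h \<noteq> i"
  shows "round_winner n rank P h = round_winner n rank P' h"
proof -
  define w where "w = round_winner n rank P' h"
  have wT': "w \<in> top_bidders n P' h" using round_winner_in_top_bidders[OF n] w_def by blast
  have wi: "w \<noteq> i" using loses w_def by simp
  have wn: "w < n" using wT' unfolding top_bidders_def by blast
  have i_below_w: "fst (P i h) < fst (P w h)"
    using wT' i raised others[OF wi] unfolding top_bidders_def by force
  have wT: "w \<in> top_bidders n P h"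
    using wT' wn i_below_w others[OF wi] others unfolding top_bidders_def
    by (smt (verit, best) mem_Collect_eq)
  have sub: "top_bidders n P h \<subseteq> top_bidders n P' h"
  proof
    fix j assume jT: "j \<in> top_bidders n P h"
    then have "j \<noteq> i" "fst (P w h) \<le> fst (P j h)"
      using wn i_below_w unfolding top_bidders_def by fastforce+
    with jT wT' others[OF wi] others show "j \<in> top_bidders n P' h"
      unfolding top_bidders_def by force
  qed
  define w0 where "w0 = round_winner n rank P h"
  have w0T: "w0 \<in> top_bidders n P h" using round_winner_in_top_bidders[OF n] w0_def by blast
  have "rank h w0 = rank h w"
    using round_winner_rank_le[OF wT, where rank=rank]
      round_winner_rank_le[OF subsetD[OF sub w0T], where rank=rank] w0_def w_def
    by simp
  moreover have "w0 < n" using w0T unfolding top_bidders_def by blast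
  ultimately show ?thesis using inj wn w0_def w_def by (auto dest: inj_onD)
qed

lemma order_statistic_lower_bound:
  fixes f :: "'a::linorder \<Rightarrow> 'b::linorder"
  assumes fin: "finite S" and s: "1 \<le> s" "s \<le> card S"
    and few_below: "card {x\<in>S. f x < c} < s"
  shows "c \<le> sort (map f (sorted_list_of_set S)) ! (s - 1)"
proof (rule ccontr)
  define xs where "xs = sorted_list_of_set S"
  define L where "L = sort (map f xs)"
  assume "\<not> ?thesis"
  then have lt: "L ! (s - 1) < c" by (simp add: L_def xs_def)
  have len: "length L = card S" using fin by (simp add: L_def xs_def)
  have "{..<s} \<subseteq> {j. j < length L \<and> L ! j < c}"
  proof
    fix j assume "j \<in> {..<s}"
    then have j: "j \<le> s - 1" "s - 1 < length L" using s len by auto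
    then have "L ! j \<le> L ! (s - 1)" by (intro sorted_nth_mono) (simp_all add: L_def)
    then show "j \<in> {j. j < length L \<and> L ! j < c}" using lt j by auto
  qed
  then have "s \<le> card {j. j < length L \<and> L ! j < c}"
    by (metis card_lessThan card_mono finite_Collect_conjI finite_lessThan lessThan_def)
  also have "\<dots> = length (filter (\<lambda>y. y < c) L)" by (simp add: length_filter_conv_card)
  also have "\<dots> = length (filter (\<lambda>y. y < c) (map f xs))"
    by (metis L_def mset_filter mset_sort size_mset)
  also have "\<dots> = card {x\<in>S. f x < c}"
    using fin by (simp add: filter_map comp_def distinct_length_filter xs_def Int_def conj_commute)
  finally show False using few_below by simp
qed

lemma sstar_bounds:
  assumes "0 < card S" shows "1 \<le> sstar S" "sstar S \<le> card S"
proof -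
  have "1 \<le> \<lceil>real (card S) / 2\<rceil>" using assms by (simp add: one_le_ceiling)
  then show "1 \<le> sstar S" unfolding sstar_def by linarith
  have "\<lceil>real (card S) / 2\<rceil> \<le> int (card S)" by (simp add: ceiling_le_iff)
  then show "sstar S \<le> card S" unfolding sstar_def by linarith
qed

lemma auction_step_cases:
  "auction_step n m rank P h = h \<or>
   auction_step n m rank P h =
     h @ [(round_winner n rank P h, P (round_winner n rank P h) h)]"
  by (simp add: auction_step_def Let_def)

lemma auction_step_remaining_nonempty:
  "remaining m h \<noteq> {} \<Longrightarrow>
   auction_step n m rank P h = h @ [(round_winner n rank P h, P (round_winner n rank P h) h)]"
  by (simp add: auction_step_def Let_def)

lemma run_prefix:
  assumes "t \<le> t'" shows "\<exists>zs. run n m rank P t' = run n m rank P t @ zs"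
  using assms
proof (induction t' rule: dec_induct)
  case (step k)
  then show ?case
    using auction_step_cases[of n m rank P "run n m rank P k"] by (metis append.assoc run.simps(2))
qed simp

lemma run_allocates_remaining:
  assumes "valid_profile n m P" "0 < n" "j < length (run n m rank P t)"
  shows "snd (snd (run n m rank P t ! j)) \<subseteq> remaining m (take j (run n m rank P t))"
  using assms(3)
proof (induction t)
  case (Suc t)
  let ?h = "run n m rank P t"
  let ?w = "round_winner n rank P ?h"
  have "snd (P ?w ?h) \<subseteq> remaining m ?h"
    using assms(1,2) round_winner_less unfolding valid_profile_def by blast
  with Suc auction_step_cases[of n m rank P ?h] show ?case
    by (auto simp: nth_append less_Suc_eq split: if_splits)
qed simp

lemma item_in_unique_bundle:
  assumes alloc: "\<And>j. j < length L \<Longrightarrow> snd (snd (L ! j)) \<subseteq> remaining m (take j L)"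
    and "j < length L" "j' < length L"
    and "x \<in> snd (snd (L ! j))" "x \<in> snd (snd (L ! j'))"
  shows "j = j'"
proof -
  have False if "a < b" "b < length L" "x \<in> snd (snd (L ! a))" "x \<in> snd (snd (L ! b))" for a b
  proof -
    have "L ! a \<in> set (take b L)" using that by (simp add: in_set_conv_nth) (metis nth_take)
    then have "x \<notin> remaining m (take b L)" using that unfolding remaining_def by blast
    then show False using alloc that by blast
  qed
  then show ?thesis using assms(2-) by (metis linorder_neqE_nat)
qed

lemma sale_price_eq:
  assumes v: "valid_profile n m P" and n: "0 < n"
    and e: "(w, p, X) \<in> set (run n m rank P t)" and x: "x \<in> X"
  shows "sale_price n m rank P x = p"
proof -
  have price_unique: "p1 = p2"
    if "(w1, p1, X1) \<in> set (run n m rank P t1)" "(w2, p2, X2) \<in> set (run n m rank P t2)"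
       "x \<in> X1" "x \<in> X2" for w1 p1 X1 t1 w2 p2 X2 t2
  proof -
    let ?L = "run n m rank P (max t1 t2)"
    obtain zs1 zs2 where "?L = run n m rank P t1 @ zs1" "?L = run n m rank P t2 @ zs2"
      using run_prefix[of t1 "max t1 t2" n m rank P] run_prefix[of t2 "max t1 t2" n m rank P]
      by auto
    then have "(w1, p1, X1) \<in> set ?L" "(w2, p2, X2) \<in> set ?L"
      using that by (metis Un_iff set_append)+
    then obtain j j' where "j < length ?L" "?L ! j = (w1, p1, X1)" "j' < length ?L" "?L ! j' = (w2, p2, X2)"
      by (metis in_set_conv_nth)
    with item_in_unique_bundle[OF run_allocates_remaining[OF v n]] that show ?thesis by force
  qed
  have "\<exists>t w X. (w, sale_price n m rank P x, X) \<in> set (run n m rank P t) \<and> x \<in> X"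
    unfolding sale_price_def by (rule someI_ex) (use e x in blast)
  then show ?thesis using price_unique e x by blast
qed

lemma sale_price_ge_if_allocated:
  assumes "valid_profile n m P" "0 < n"
    and bids: "\<forall>e\<in>set (run n m rank P t). c \<le> fst (snd e)"
    and "x \<in> {1..m}" "x \<notin> remaining m (run n m rank P t)"
  shows "c \<le> sale_price n m rank P x"
proof -
  obtain w p X where "(w, p, X) \<in> set (run n m rank P t)" "x \<in> X"
    using assms(4,5) unfolding remaining_def by auto
  with sale_price_eq[OF assms(1,2)] bids show ?thesis by fastforce
qed

lemma units_won_run_le_items_won:
  assumes "finite S"
  shows "units_won_hist S i (run n m rank P t) \<le> card (S \<inter> items_won n m rank P i)"
  unfolding units_won_hist_def items_won_def using assms by (intro card_mono) auto

lemma units_won_hist_append_own: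
  assumes "finite S" "X \<subseteq> S \<inter> remaining m h"
  shows "units_won_hist S i (h @ [(i, p, X)]) = units_won_hist S i h + card X"
proof -
  let ?Old = "\<Union> {X. \<exists>p. (i, p, X) \<in> set h}"
  have "S \<inter> \<Union> {Y. \<exists>q. (i, q, Y) \<in> set (h @ [(i, p, X)])} = (S \<inter> ?Old) \<union> X"
    using assms(2) by auto
  moreover have "S \<inter> ?Old \<inter> X = {}" using assms(2) unfolding remaining_def by force
  moreover have "finite (S \<inter> ?Old)" "finite X" using assms by (auto intro: finite_subset)
  ultimately show ?thesis unfolding units_won_hist_def by (simp add: card_Un_disjoint)
qed

text \<open>The deviator is active while she still misses units of \<open>S\<close> and enough of them remain
  to complete \<open>s*\<close>; this is exactly when \<open>core_deviation\<close> constrains her.\<close>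

definition core_active :: "nat \<Rightarrow> nat set \<Rightarrow> nat \<Rightarrow> hist \<Rightarrow> bool" where
  "core_active m S i h \<longleftrightarrow>
     units_won_hist S i h < sstar S \<and> sstar S \<le> units_won_hist S i h + card (S \<inter> remaining m h)"

lemma core_deviation_active:
  assumes "core_deviation m S vhat i bi d" "core_active m S i h"
  shows "if vhat / 2 \<le> fst (bi h) then d h = bi h
         else fst (d h) = vhat / 2 \<and> snd (d h) \<subseteq> S \<inter> remaining m h
           \<and> card (snd (d h)) = sstar S - units_won_hist S i h"
  using assms unfolding core_deviation_def core_active_def Let_def by blast

lemma core_deviation_step:
  assumes n: "0 < n" and i: "i < n" and inj: "inj_on (rank h) {..<n}" and fin: "finite S"
    and cd: "core_deviation m S vhat i (b i) d" and act: "core_active m S i h"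
    and incomplete: "units_won_hist S i (auction_step n m rank (b(i := d)) h) < sstar S"
  obtains e where "auction_step n m rank (b(i := d)) h = h @ [e]"
    "auction_step n m rank b h = h @ [e]" "vhat / 2 \<le> fst (snd e)"
proof -
  let ?P' = "b(i := d)"
  define w where "w = round_winner n rank b h"
  define w' where "w' = round_winner n rank ?P' h"
  have "remaining m h \<noteq> {}" using act unfolding core_active_def by auto
  then have step': "auction_step n m rank ?P' h = h @ [(w', ?P' w' h)]"
    and step: "auction_step n m rank b h = h @ [(w, b w h)]"
    by (simp_all add: auction_step_remaining_nonempty w_def w'_def)
  have others: "j \<noteq> i \<Longrightarrow> ?P' j h = b j h" for j by simp
  show ?thesis
  proof (cases "vhat / 2 \<le> fst (b i h)")
    case True
    then have "?P' j h = b j h" for j using core_deviation_active[OF cd act] by simp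
    then have "w' = w" unfolding w_def w'_def round_winner_def top_bidders_def by simp
    moreover have "fst (b i h) \<le> fst (b w h)" using bid_le_winning_bid[OF n i] w_def by blast
    ultimately show ?thesis using that step step' True \<open>?P' w h = b w h\<close> by simp
  next
    case False
    then have d: "fst (d h) = vhat / 2" "snd (d h) \<subseteq> S \<inter> remaining m h"
      "card (snd (d h)) = sstar S - units_won_hist S i h"
      using core_deviation_active[OF cd act] by auto
    have "w' \<noteq> i"
    proof
      assume "w' = i"
      then have "auction_step n m rank ?P' h = h @ [(i, fst (d h), snd (d h))]" using step' by simp
      then have "units_won_hist S i (auction_step n m rank ?P' h)
          = units_won_hist S i h + card (snd (d h))"
        using units_won_hist_append_own[OF fin d(2), of i "fst (d h)"] by simp
      then show False using d(3) act incomplete unfolding core_active_def by simp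
    qed
    then have "w = w'"
      unfolding w_def w'_def
      using round_winner_unchanged_if_raised_bidder_loses[where rank=rank and h=h
          and P=b and P'="?P'", OF n i inj] False d(1) w'_def
      by simp
    moreover have "fst (?P' i h) \<le> fst (?P' w' h)" using bid_le_winning_bid[OF n i] w'_def by blast
    ultimately show ?thesis using that step step' d(1) others[OF \<open>w' \<noteq> i\<close>] by simp
  qed
qed

lemma core_deviation_run:
  assumes "0 < n" "i < n" "\<forall>h. inj_on (rank h) {..<n}" "finite S"
    and cd: "core_deviation m S vhat i (b i) d"
    and incomplete: "\<forall>t. units_won_hist S i (run n m rank (b(i := d)) t) < sstar S"
    and active: "\<forall>t'<t. core_active m S i (run n m rank (b(i := d)) t')"
  shows "run n m rank (b(i := d)) t = run n m rank b t
    \<and> (\<forall>e\<in>set (run n m rank b t). vhat / 2 \<le> fst (snd e))"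
  using active
proof (induction t)
  case (Suc t)
  let ?h = "run n m rank (b(i := d)) t"
  have active_upto: "\<forall>t'<Suc t. core_active m S i (run n m rank (b(i := d)) t')"
    using Suc.prems by (simp add: fun_upd_def)
  then have "\<forall>t'<t. core_active m S i (run n m rank (b(i := d)) t')" by simp
  with Suc.IH have IH: "?h = run n m rank b t" "\<forall>e\<in>set (run n m rank b t). vhat / 2 \<le> fst (snd e)"
    by (simp_all add: fun_upd_def)
  have "core_active m S i ?h" using active_upto by simp
  moreover have "units_won_hist S i (auction_step n m rank (b(i := d)) ?h) < sstar S"
    using incomplete[rule_format, of "Suc t"] by simp
  ultimately obtain e where "auction_step n m rank (b(i := d)) ?h = ?h @ [e]"
    "auction_step n m rank b ?h = ?h @ [e]" "vhat / 2 \<le> fst (snd e)"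
    using core_deviation_step[where rank=rank and h="?h" and b=b and d=d, OF assms(1,2) _ assms(4) cd]
      assms(3) by blast
  with IH show ?case by (simp add: fun_upd_def)
qed simp

lemma core_deviation_few_cheap_units:
  assumes n: "0 < n" "i < n" "\<forall>h. inj_on (rank h) {..<n}"
    and S: "S \<subseteq> {1..m}" "finite S" and v: "valid_profile n m b"
    and cd: "core_deviation m S vhat i (b i) d"
    and sold: "S \<subseteq> sold_items n m rank b"
    and incomplete: "\<forall>t. units_won_hist S i (run n m rank (b(i := d)) t) < sstar S"
  shows "card {x\<in>S. sale_price n m rank b x < vhat / 2} < sstar S"
proof (cases "\<forall>t. core_active m S i (run n m rank (b(i := d)) t)")
  case True
  have "vhat / 2 \<le> sale_price n m rank b x" if "x \<in> S" for x
  proof -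
    obtain t w p X where "(w, p, X) \<in> set (run n m rank b t)" "x \<in> X"
      using sold \<open>x \<in> S\<close> unfolding sold_items_def by blast
    then have "x \<notin> remaining m (run n m rank b t)" unfolding remaining_def by force
    moreover have "\<forall>e\<in>set (run n m rank b t). vhat / 2 \<le> fst (snd e)"
      using core_deviation_run[OF n S(2) cd incomplete] True by blast
    ultimately show ?thesis
      using sale_price_ge_if_allocated[OF v n(1)] S(1) that by blast
  qed
  then have "{x\<in>S. sale_price n m rank b x < vhat / 2} = {}" by (auto simp: not_less)
  moreover have "0 < sstar S" using incomplete[rule_format, of 0] by simp
  ultimately show ?thesis by (metis card.empty)
next
  case False
  then obtain t0 where inactive: "\<not> core_active m S i (run n m rank (b(i := d)) t0)"
    and active: "\<forall>t<t0. core_active m S i (run n m rank (b(i := d)) t)"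
    using exists_least_iff[of "\<lambda>t. \<not> core_active m S i (run n m rank (b(i := d)) t)"] by auto
  have agree: "run n m rank (b(i := d)) t0 = run n m rank b t0"
    and bids: "\<forall>e\<in>set (run n m rank b t0). vhat / 2 \<le> fst (snd e)"
    using core_deviation_run[OF n S(2) cd incomplete active] by simp_all
  have "{x\<in>S. sale_price n m rank b x < vhat / 2} \<subseteq> S \<inter> remaining m (run n m rank b t0)"
  proof
    fix x assume x: "x \<in> {x\<in>S. sale_price n m rank b x < vhat / 2}"
    with S(1) have "x \<in> {1..m}" by blast
    with x sale_price_ge_if_allocated[OF v n(1) bids] show "x \<in> S \<inter> remaining m (run n m rank b t0)"
      by force
  qed
  then have "card {x\<in>S. sale_price n m rank b x < vhat / 2}
      \<le> card (S \<inter> remaining m (run n m rank b t0))"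
    using S(2) by (intro card_mono) auto
  also have "\<dots> < sstar S"
    using inactive incomplete[rule_format, of t0] agree unfolding core_active_def by simp
  finally show ?thesis .
qed

theorem mainTheorem9:
  fixes n m i :: nat and rank :: "hist \<Rightarrow> nat \<Rightarrow> nat" and b :: profile and d :: strategy
    and S :: "nat set" and vhat :: real
  assumes "i < n"
    and "S \<subseteq> {1..m}"
    and "0 \<le> vhat"
    and "\<forall>h. inj_on (rank h) {..<n}"
    and "valid_profile n m b"
    and "valid_profile n m (b(i := d))"
    and "core_deviation m S vhat i (b i) d"
    and "S \<subseteq> sold_items n m rank b"
    and "card (S \<inter> items_won n m rank (b(i := d)) i) < sstar S"
  shows "sort (map (sale_price n m rank b) (sorted_list_of_set S)) ! (sstar S - 1) \<ge> vhat / 2"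
proof -
  have fin: "finite S" using assms(2) finite_subset by blast
  have incomplete: "\<forall>t. units_won_hist S i (run n m rank (b(i := d)) t) < sstar S"
    using units_won_run_le_items_won[OF fin] assms(9) le_less_trans by blast
  have "0 < card S" using assms(9) by (cases "card S") (simp_all add: sstar_def)
  moreover have "card {x\<in>S. sale_price n m rank b x < vhat / 2} < sstar S"
    using core_deviation_few_cheap_units[OF _ assms(1,4,2) fin assms(5,7,8) incomplete] assms(1)
    by simp
  ultimately show ?thesis using order_statistic_lower_bound[OF fin sstar_bounds] by blast
qed

end
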